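(* Under both the cost preference model and the overlap preference model, the approval-maximising rule is strategyproof over the class $\mathcal{I}_{\mathit{unit}}$ of allocation instances with unit costs; that is, for every allocation instance $I=\langle\mathcal{P},c,B\rangle$ in which all projects of $\mathcal{P}$ have the same cost, every profile $\boldsymbol{A}$ and every agent $i\in\mathcal{N}$, $F(I,(\boldsymbol{A}_{-i},\mathit{top}_i(\mathcal{P})))\succeq_{\mathit{top}_i(\mathcal{P})}F(I,\boldsymbol{A})$, where $F$ is the approval-maximising rule.
   Context: Let $\mathbb{P}=\{p_1,\dots,p_m\}$ be a finite set of projects, $c:\mathbb{P}\to\mathbb{N}$ a cost function with $c(P)=\sum_{p\in P}c(p)$, $B\in\mathbb{N}$ a budget with $c(p)\le B$ for all $p$; agents $\mathcal{N}=\{1,\dots,n\}$. An allocation instance is $I=\langle\mathcal{P},c,B\rangle$ with $\mathcal{P}\subseteq\mathbb{P}$; a profile is $\boldsymbol{A}=(A_1,\dots,A_n)$ with $A_i\subseteq\mathcal{P}$; $(\boldsymbol{A}_{-i},A_i')$ replaces $A_i$ by $A_i'$; $n_p^{\boldsymbol{A}}=|\{i:p\in A_i\}|$; $\mathcal{A}(I)$ is the set of $A\subseteq\mathcal{P}$ with $c(A)\le B$. Tie-breaking: for a nonempty family $\mathfrak{P}$ of subsets of $\mathbb{P}$, $T(\mathfrak{P})$ is the unique $P\in\mathfrak{P}$ such that for all $P'\in\mathfrak{P}\setminus\{P\}$ the lowest-index project of $(P\setminus P')\cup(P'\setminus P)$ lies in $P$. The approval-maximising rule returns $F(I,\boldsymbol{A})=T(\operatorname*{argmax}_{A\in\mathcal{A}(I)}\sum_{p\in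 A}n_p^{\boldsymbol{A}})$. Greedy selection $\mathit{GREED}(P,\gg)$, for $P\subseteq\mathbb{P}$ and a strict linear order $\gg$ on $P$, examines projects in the order $\gg$ and selects a project iff doing so keeps the total cost of selected projects at most $B$. Each agent $i$ has a strict linear order $\rhd_i$ on $\mathbb{P}$ and ideal set $\mathit{top}_i(\mathcal{P})=\mathit{GREED}(\mathcal{P},\rhd_i|_{\mathcal{P}})$. For $P\subseteq\mathbb{P}$: under the overlap model $A\succeq_P A'$ iff $|A\cap P|\ge|A'\cap P|$; under the cost model $A\succeq_P A'$ iff $c(A\cap P)\ge c(A'\cap P)$. *)

theory Defs
  imports Main
begin

(* Projects are natural numbers; the index of project p is p itself,
   so "lowest-index project" = minimum. *)

definition total_cost :: "(nat \<Rightarrow> nat) \<Rightarrow> nat set \<Rightarrow> nat" where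
  "total_cost c P = (\<Sum>p\<in>P. c p)"

definition feasible :: "nat set \<Rightarrow> (nat \<Rightarrow> nat) \<Rightarrow> nat \<Rightarrow> nat set set" where
  "feasible Pr c B = {A. A \<subseteq> Pr \<and> total_cost c A \<le> B}"

definition tiebreak :: "nat set set \<Rightarrow> nat set" where
  "tiebreak F = (THE P. P \<in> F \<and>
     (\<forall>P'\<in>F - {P}. Min ((P - P') \<union> (P' - P)) \<in> P))"

definition approvals :: "nat \<Rightarrow> (nat \<Rightarrow> nat set) \<Rightarrow> nat \<Rightarrow> nat" where
  "approvals n A p = card {i\<in>{1..n}. p \<in> A i}"

definition approval_score :: "nat \<Rightarrow> (nat \<Rightarrow> nat set) \<Rightarrow> nat set \<Rightarrow> nat" where
  "approval_score n A S = (\<Sum>p\<in>S. approvals n A p)"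

definition approval_max :: "nat set \<Rightarrow> (nat \<Rightarrow> nat) \<Rightarrow> nat \<Rightarrow> nat \<Rightarrow> (nat \<Rightarrow> nat set) \<Rightarrow> nat set" where
  "approval_max Pr c B n A = tiebreak
     {S \<in> feasible Pr c B. \<forall>S'\<in>feasible Pr c B. approval_score n A S' \<le> approval_score n A S}"

fun greed_list :: "(nat \<Rightarrow> nat) \<Rightarrow> nat \<Rightarrow> nat list \<Rightarrow> nat set \<Rightarrow> nat set" where
  "greed_list c B [] S = S"
| "greed_list c B (p # ps) S =
     (if total_cost c S + c p \<le> B then greed_list c B ps (insert p S) else greed_list c B ps S)"

(* the enumeration of P in the order R ((x,y) \<in> R means x is ranked above y) *)
definition order_list :: "nat set \<Rightarrow> (nat \<times> nat) set \<Rightarrow> nat list" where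
  "order_list P R = (THE xs. set xs = P \<and> distinct xs \<and> sorted_wrt (\<lambda>x y. (x, y) \<in> R) xs)"

definition GREED :: "(nat \<Rightarrow> nat) \<Rightarrow> nat \<Rightarrow> nat set \<Rightarrow> (nat \<times> nat) set \<Rightarrow> nat set" where
  "GREED c B P R = greed_list c B (order_list P R) {}"

definition top_set :: "(nat \<Rightarrow> nat) \<Rightarrow> nat \<Rightarrow> (nat \<times> nat) set \<Rightarrow> nat set \<Rightarrow> nat set" where
  "top_set c B R Pr = GREED c B Pr (R \<inter> (Pr \<times> Pr))"

definition pref_overlap :: "nat set \<Rightarrow> nat set \<Rightarrow> nat set \<Rightarrow> bool" where
  "pref_overlap P A A' \<longleftrightarrow> card (A \<inter> P) \<ge> card (A' \<inter> P)"

definition pref_cost :: "(nat \<Rightarrow> nat) \<Rightarrow> nat set \<Rightarrow> nat set \<Rightarrow> nat set \<Rightarrow> bool" where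
  "pref_cost c P A A' \<longleftrightarrow> total_cost c (A \<inter> P) \<ge> total_cost c (A' \<inter> P)"

end

theory Submission
  imports Defs
begin

text \<open>
  With unit costs the feasible bundles are exactly the subsets of the projects of at most
  some fixed size, so the winning bundle \<open>W\<close> of the approval-maximising rule consists of the
  best-scoring projects, ties broken by index: every project outside \<open>W\<close> is beaten by every
  project inside, and \<open>W\<close> cannot be enlarged. Hence the winners for the sincere and the
  manipulated profile have the same size. If the manipulated winner \<open>W'\<close> contained fewer
  projects of the reported set \<open>T\<close> than \<open>W\<close>, there would be a project \<open>p \<in> W \<inter> T\<close> outside
  \<open>W'\<close> and a project \<open>q \<in> W' - T\<close> outside \<open>W\<close>. Reporting \<open>T\<close> can only raise the score
  of \<open>p\<close> and lower that of \<open>q\<close>, so \<open>p\<close> beats \<open>q\<close> in both profiles, contradicting \<open>q \<in> W'\<close>,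
  \<open>p \<notin> W'\<close>. Costs then follow from cardinalities. Nothing about \<open>T\<close> is used.
\<close>

definition first_difference :: "nat set \<Rightarrow> nat set \<Rightarrow> nat" where
  "first_difference P Q = Min (sym_diff P Q)"

lemma first_difference_commute: "first_difference P Q = first_difference Q P"
  unfolding first_difference_def by (simp add: Un_commute)

lemma first_difference_mem:
  assumes "finite P" "finite Q" "P \<noteq> Q"
  shows "first_difference P Q \<in> sym_diff P Q"
  unfolding first_difference_def using assms by (intro Min_in) auto

lemma less_first_difference_iff:
  assumes "finite P" "finite Q" "x < first_difference P Q"
  shows "x \<in> P \<longleftrightarrow> x \<in> Q"
proof (rule ccontr)
  assume "\<not> (x \<in> P \<longleftrightarrow> x \<in> Q)"
  then have "first_difference P Q \<le> x"
    unfolding first_difference_def using assms(1,2) by (intro Min_le) auto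
  with assms(3) show False by simp
qed

lemma first_difference_eqI:
  assumes "finite P" "finite Q" "a \<in> sym_diff P Q"
    and "\<And>x. x < a \<Longrightarrow> x \<in> P \<longleftrightarrow> x \<in> Q"
  shows "first_difference P Q = a"
  unfolding first_difference_def
  using assms by (intro Min_eqI) (auto simp: not_less[symmetric])

lemma first_difference_trans:
  assumes fin: "finite P" "finite Q" "finite R" and "P \<noteq> Q" "Q \<noteq> R"
    and "first_difference P Q \<in> P" "first_difference Q R \<in> Q"
  shows "P \<noteq> R \<and> first_difference P R \<in> P"
proof -
  define a b where "a = first_difference P Q" and "b = first_difference Q R"
  have a: "a \<in> P" "a \<notin> Q" "\<And>x. x < a \<Longrightarrow> x \<in> P \<longleftrightarrow> x \<in> Q"
    using first_difference_mem[of P Q] less_first_difference_iff[of P Q] assms a_def by auto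
  have b: "b \<in> Q" "b \<notin> R" "\<And>x. x < b \<Longrightarrow> x \<in> Q \<longleftrightarrow> x \<in> R"
    using first_difference_mem[of Q R] less_first_difference_iff[of Q R] assms b_def by auto
  have "a \<noteq> b" using a b by auto
  then consider "a < b" | "b < a" by linarith
  then show ?thesis
  proof cases
    case 1
    with a b have "first_difference P R = a"
      by (intro first_difference_eqI) (use fin in auto)
    with 1 a b show ?thesis by auto
  next
    case 2
    with a b have "first_difference P R = b"
      by (intro first_difference_eqI) (use fin in auto)
    with 2 a b show ?thesis by auto
  qed
qed

lemma ex_tiebreak_winner:
  assumes "finite F" "F \<noteq> {}" "\<forall>P\<in>F. finite P"
  shows "\<exists>P\<in>F. \<forall>Q\<in>F - {P}. first_difference P Q \<in> P"
  using assms
proof (induction F rule: finite_ne_induct)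
  case (singleton X)
  then show ?case by simp
next
  case (insert X F)
  then obtain P where P: "P \<in> F" "\<forall>Q\<in>F - {P}. first_difference P Q \<in> P" by auto
  show ?case
  proof (cases "X = P \<or> first_difference P X \<in> P")
    case True
    with P show ?thesis by auto
  next
    case False
    have fin: "finite X" "finite P" using insert P by auto
    with False have XP: "first_difference X P \<in> X"
      using first_difference_mem[of P X] first_difference_commute[of X P] by auto
    have "first_difference X Q \<in> X" if "Q \<in> F - {P}" "Q \<noteq> X" for Q
      using first_difference_trans[of X P Q] XP P that insert fin by auto
    with XP have "\<forall>Q\<in>insert X F - {X}. first_difference X Q \<in> X" by auto
    then show ?thesis by auto
  qed
qed

lemma tiebreak_winner:
  assumes "finite F" "F \<noteq> {}" "\<forall>P\<in>F. finite P"
  shows "tiebreak F \<in> F" "\<forall>Q\<in>F - {tiebreak F}. first_difference (tiebreak F) Q \<in> tiebreak F"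
proof -
  obtain P where P: "P \<in> F" "\<forall>Q\<in>F - {P}. first_difference P Q \<in> P"
    using ex_tiebreak_winner[OF assms] by blast
  have unique: "Q = P" if Q: "Q \<in> F" "\<forall>P'\<in>F - {Q}. first_difference Q P' \<in> Q" for Q
  proof (rule ccontr)
    assume "Q \<noteq> P"
    with P Q have "first_difference Q P \<in> Q" "first_difference P Q \<in> P" by blast+
    then have "first_difference Q P \<in> Q \<inter> P" by (simp add: first_difference_commute[of P Q])
    moreover have "first_difference Q P \<in> sym_diff Q P"
      using \<open>Q \<noteq> P\<close> assms(3) P(1) Q(1) by (intro first_difference_mem) auto
    ultimately show False by blast
  qed
  have "tiebreak F = P"
    unfolding tiebreak_def first_difference_def[symmetric]
    by (rule the_equality) (use P unique in blast)+
  with P show "tiebreak F \<in> F" "\<forall>Q\<in>F - {tiebreak F}. first_difference (tiebreak F) Q \<in> tiebreak F"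
    by auto
qed

definition optimal_bundles :: "nat set \<Rightarrow> (nat \<Rightarrow> nat) \<Rightarrow> nat \<Rightarrow> (nat \<Rightarrow> nat) \<Rightarrow> nat set set"
  where "optimal_bundles Pr c B g =
    {S \<in> feasible Pr c B. \<forall>S'\<in>feasible Pr c B. sum g S' \<le> sum g S}"

lemma approval_max_eq_tiebreak_optimal_bundles:
  "approval_max Pr c B n A = tiebreak (optimal_bundles Pr c B (approvals n A))"
  unfolding approval_max_def approval_score_def optimal_bundles_def ..

lemma finite_feasible: "finite Pr \<Longrightarrow> finite (feasible Pr c B)"
  unfolding feasible_def by (rule finite_subset[of _ "Pow Pr"]) auto

lemma optimal_bundles_nonempty:
  assumes "finite Pr"
  shows "optimal_bundles Pr c B g \<noteq> {}"
proof -
  have fin: "finite (sum g ` feasible Pr c B)" using assms by (simp add: finite_feasible)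
  have "{} \<in> feasible Pr c B" by (simp add: feasible_def total_cost_def)
  then obtain S where "S \<in> feasible Pr c B" "sum g S = Max (sum g ` feasible Pr c B)"
    using Max_in[OF fin] by fastforce
  with fin show ?thesis unfolding optimal_bundles_def by auto
qed

locale tiebroken_optimum =
  fixes Pr :: "nat set" and c :: "nat \<Rightarrow> nat" and B :: nat and g :: "nat \<Rightarrow> nat"
    and W :: "nat set"
  assumes finite_projects: "finite Pr"
    and optimal: "W \<in> optimal_bundles Pr c B g"
    and wins_ties: "\<And>S. S \<in> optimal_bundles Pr c B g \<Longrightarrow> S \<noteq> W \<Longrightarrow> first_difference W S \<in> W"

lemma tiebroken_optimum_tiebreak:
  assumes "finite Pr"
  shows "tiebroken_optimum Pr c B g (tiebreak (optimal_bundles Pr c B g))"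
proof -
  have "finite (optimal_bundles Pr c B g)" "\<forall>S\<in>optimal_bundles Pr c B g. finite S"
    using assms finite_feasible[OF assms] finite_subset
    unfolding optimal_bundles_def feasible_def by auto
  from tiebreak_winner[OF this(1) optimal_bundles_nonempty[OF assms] this(2)] assms show ?thesis
    by unfold_locales auto
qed

context tiebroken_optimum
begin

lemma subset: "W \<subseteq> Pr"
  and total_cost_le: "total_cost c W \<le> B"
  and sum_le: "S \<in> feasible Pr c B \<Longrightarrow> sum g S \<le> sum g W"
  using optimal unfolding optimal_bundles_def feasible_def by auto

lemma finite: "finite W"
  using subset finite_projects by (rule finite_subset)

lemma first_difference_mem_if_sum_ge:
  assumes "S \<in> feasible Pr c B" "sum g W \<le> sum g S" "S \<noteq> W"
  shows "first_difference W S \<in> W"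
proof -
  have "S \<in> optimal_bundles Pr c B g"
    using assms sum_le unfolding optimal_bundles_def by (auto intro: order_trans)
  then show ?thesis using assms(3) by (rule wins_ties)
qed

lemma exchange:
  assumes p: "p \<in> W" and q: "q \<in> Pr - W" and "c q \<le> c p"
  shows "g q < g p \<or> (g q = g p \<and> p < q)"
proof -
  define S where "S = insert q (W - {p})"
  have "total_cost c S + c p = total_cost c W + c q"
    using p q finite sum.remove[OF finite p, of c] unfolding S_def total_cost_def by simp
  with \<open>c q \<le> c p\<close> have "S \<in> feasible Pr c B"
    using total_cost_le subset p q unfolding S_def feasible_def by auto
  moreover have score: "sum g S + g p = sum g W + g q"
    using p q finite sum.remove[OF finite p, of g] unfolding S_def by simp
  ultimately have "g q \<le> g p" using sum_le by fastforce
  moreover have "p < q" if "g q = g p"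
  proof -
    have "S \<noteq> W" using q unfolding S_def by auto
    with \<open>S \<in> feasible Pr c B\<close> score that have "first_difference W S \<in> W"
      by (intro first_difference_mem_if_sum_ge) auto
    moreover have "sym_diff W S = {p, q}" using p q unfolding S_def by auto
    ultimately have "min p q \<in> W" unfolding first_difference_def by simp
    with p q show "p < q" unfolding min_def by (metis DiffD2 le_neq_implies_less)
  qed
  ultimately show ?thesis by linarith
qed

lemma not_augmentable:
  assumes q: "q \<in> Pr - W"
  shows "B < total_cost c W + c q"
proof (rule ccontr)
  assume "\<not> ?thesis"
  then have "insert q W \<in> feasible Pr c B"
    using q finite subset unfolding feasible_def total_cost_def by simp
  moreover have "sum g W \<le> sum g (insert q W)" using finite q by simp
  moreover have "insert q W \<noteq> W" using q by blast
  ultimately have "first_difference W (insert q W) \<in> W" by (rule first_difference_mem_if_sum_ge)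
  moreover have "sym_diff W (insert q W) = {q}" using q by blast
  ultimately show False using q unfolding first_difference_def by simp
qed

end

lemma approval_max_subset: "finite Pr \<Longrightarrow> approval_max Pr c B n A \<subseteq> Pr"
  unfolding approval_max_eq_tiebreak_optimal_bundles
  by (rule tiebroken_optimum.subset[OF tiebroken_optimum_tiebreak])

lemma total_cost_unit:
  assumes "\<forall>p\<in>Pr. c p = c0" "S \<subseteq> Pr"
  shows "total_cost c S = c0 * card S"
  using assms unfolding total_cost_def by (simp add: subset_iff)

lemma card_le_if_not_augmentable:
  assumes unit: "\<forall>p\<in>Pr. c p = c0" and "finite Pr"
    and S: "S \<subseteq> Pr" "\<forall>q\<in>Pr - S. B < total_cost c S + c q"
    and S': "S' \<subseteq> Pr" "total_cost c S' \<le> B"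
  shows "card S' \<le> card S"
proof (rule ccontr)
  assume less: "\<not> card S' \<le> card S"
  have "finite S" using S(1) \<open>finite Pr\<close> by (rule finite_subset)
  with less obtain q where q: "q \<in> S'" "q \<notin> S" using card_mono[of S S'] by blast
  have "total_cost c S + c q = c0 * Suc (card S)"
    using total_cost_unit[OF unit S(1)] unit q S' by auto
  also have "\<dots> \<le> c0 * card S'" using less by (intro mult_le_mono2) simp
  also have "\<dots> \<le> B" using total_cost_unit[OF unit S'(1)] S'(2) by simp
  finally have "total_cost c S + c q \<le> B" .
  moreover have "q \<in> Pr - S" using q S'(1) by blast
  ultimately show False using S(2) by (meson not_le)
qed

lemma tiebroken_optima_card_eq:
  assumes "tiebroken_optimum Pr c B g W" "tiebroken_optimum Pr c B g' W'"
    and unit: "\<forall>p\<in>Pr. c p = c0"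
  shows "card W = card W'"
proof -
  interpret W: tiebroken_optimum Pr c B g W by fact
  interpret W': tiebroken_optimum Pr c B g' W' by fact
  show ?thesis
    using card_le_if_not_augmentable[OF unit W.finite_projects W.subset _ W'.subset W'.total_cost_le]
      card_le_if_not_augmentable[OF unit W.finite_projects W'.subset _ W.subset W.total_cost_le]
      W.not_augmentable W'.not_augmentable
    by (meson antisym)
qed

lemma obtain_exchange_pair:
  assumes "finite W" "finite W'" "card W = card W'" "card (W' \<inter> T) < card (W \<inter> T)"
  obtains p q where "p \<in> W \<inter> T" "p \<notin> W'" "q \<in> W' - T" "q \<notin> W"
proof -
  have "card (W - T) < card (W' - T)"
    using assms card_Int_Diff[of W T] card_Int_Diff[of W' T] by linarith
  then have "\<not> W' - T \<subseteq> W - T" using card_mono[of "W - T" "W' - T"] assms(1) by auto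
  moreover have "\<not> W \<inter> T \<subseteq> W' \<inter> T" using card_mono[of "W' \<inter> T" "W \<inter> T"] assms(2,4) by auto
  ultimately show ?thesis using that by blast
qed

lemma approvals_le_approvals_update:
  "p \<in> T \<Longrightarrow> approvals n A p \<le> approvals n (A(i := T)) p"
  unfolding approvals_def by (rule card_mono) auto

lemma approvals_update_le_approvals:
  "p \<notin> T \<Longrightarrow> approvals n (A(i := T)) p \<le> approvals n A p"
  unfolding approvals_def by (rule card_mono) auto

lemma card_approval_max_Int_le_report:
  assumes "finite Pr" and unit: "\<forall>p\<in>Pr. c p = c0"
  shows "card (approval_max Pr c B n A \<inter> T) \<le> card (approval_max Pr c B n (A(i := T)) \<inter> T)"
proof (rule ccontr)
  define W W' where "W = approval_max Pr c B n A" and "W' = approval_max Pr c B n (A(i := T))"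
  interpret W: tiebroken_optimum Pr c B "approvals n A" W
    unfolding W_def approval_max_eq_tiebreak_optimal_bundles
    using \<open>finite Pr\<close> by (rule tiebroken_optimum_tiebreak)
  interpret W': tiebroken_optimum Pr c B "approvals n (A(i := T))" W'
    unfolding W'_def approval_max_eq_tiebreak_optimal_bundles
    using \<open>finite Pr\<close> by (rule tiebroken_optimum_tiebreak)
  have "card W = card W'"
    using W.tiebroken_optimum_axioms W'.tiebroken_optimum_axioms unit
    by (rule tiebroken_optima_card_eq)
  moreover assume "\<not> card (W \<inter> T) \<le> card (W' \<inter> T)"
  then have "card (W' \<inter> T) < card (W \<inter> T)" by simp
  ultimately obtain p q where p: "p \<in> W \<inter> T" "p \<notin> W'" and q: "q \<in> W' - T" "q \<notin> W"
    by (rule obtain_exchange_pair[OF W.finite W'.finite])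
  have "p \<in> Pr" "q \<in> Pr" using p q W.subset W'.subset by auto
  with unit have "c p = c q" by simp
  have "approvals n A q < approvals n A p \<or> (approvals n A q = approvals n A p \<and> p < q)"
    by (rule W.exchange) (use p q \<open>q \<in> Pr\<close> \<open>c p = c q\<close> in auto)
  moreover have "approvals n (A(i := T)) p < approvals n (A(i := T)) q
      \<or> (approvals n (A(i := T)) p = approvals n (A(i := T)) q \<and> q < p)"
    by (rule W'.exchange) (use p q \<open>p \<in> Pr\<close> \<open>c p = c q\<close> in auto)
  moreover have "approvals n A p \<le> approvals n (A(i := T)) p"
    using p by (intro approvals_le_approvals_update) simp
  moreover have "approvals n (A(i := T)) q \<le> approvals n A q"
    using q by (intro approvals_update_le_approvals) simp
  ultimately show False by linarith
qed

theorem proposition9: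
  fixes PP Pr :: "nat set" and c :: "nat \<Rightarrow> nat" and B n i :: nat
    and A :: "nat \<Rightarrow> nat set" and R :: "nat \<Rightarrow> (nat \<times> nat) set"
  assumes "finite PP"
    and "\<forall>p\<in>PP. c p \<le> B"
    and "Pr \<subseteq> PP"
    and unit: "\<forall>p\<in>Pr. \<forall>q\<in>Pr. c p = c q"
    and "\<forall>j\<in>{1..n}. A j \<subseteq> Pr"
    and "\<forall>j\<in>{1..n}. strict_linear_order_on PP (R j) \<and> R j \<subseteq> PP \<times> PP"
    and "i \<in> {1..n}"
  shows "pref_cost c (top_set c B (R i) Pr)
           (approval_max Pr c B n (A(i := top_set c B (R i) Pr))) (approval_max Pr c B n A)
       \<and> pref_overlap (top_set c B (R i) Pr)
           (approval_max Pr c B n (A(i := top_set c B (R i) Pr))) (approval_max Pr c B n A)"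
proof -
  obtain c0 where unit_cost: "\<forall>p\<in>Pr. c p = c0"
    using unit by (cases "Pr = {}") blast+
  have "finite Pr" using assms(3,1) by (rule finite_subset)
  define T where "T = top_set c B (R i) Pr"
  define W W' where "W = approval_max Pr c B n A" and "W' = approval_max Pr c B n (A(i := T))"
  have "card (W \<inter> T) \<le> card (W' \<inter> T)"
    unfolding W_def W'_def using \<open>finite Pr\<close> unit_cost by (rule card_approval_max_Int_le_report)
  moreover have "W \<inter> T \<subseteq> Pr" "W' \<inter> T \<subseteq> Pr"
    unfolding W_def W'_def using approval_max_subset[OF \<open>finite Pr\<close>] by blast+
  ultimately show ?thesis
    unfolding pref_cost_def pref_overlap_def T_def[symmetric] W_def[symmetric] W'_def[symmetric]
    by (simp add: total_cost_unit[OF unit_cost])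
qed

end
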